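(* Let $\{w^k\}$ be generated by the L-GADMM iteration and $\{\bar w^k\}$ be the auxiliary sequence. Then for every $k\ge0$, $$(\bar w^k-\bar w^{k+1})^\top Q\big\{(w^k-w^{k+1})-(\bar w^k-\bar w^{k+1})\big\}\ge0.$$
   Context: Standing setting. Let $m\ge 2$, $\ell$, $n_1,\dots,n_m$ be positive integers. For $i=1,\dots,m$ let $\theta_i:\mathbb{R}^{n_i}\to\mathbb{R}$ be convex, $\mathcal{X}_i\subseteq\mathbb{R}^{n_i}$ nonempty closed convex, $A_i\in\mathbb{R}^{\ell\times n_i}$ of full column rank, and $b\in\mathbb{R}^\ell$. Problem (P): $\min\{\sum_{i=1}^m\theta_i(x_i):\sum_{i=1}^mA_ix_i=b,\ x_i\in\mathcal{X}_i\}$, assumed to have a nonempty solution set. Write $u=(x_1,\dots,x_m)$, $w=(x_1,\dots,x_m,y)$ with $y\in\mathbb{R}^\ell$, $\theta(u)=\sum_i\theta_i(x_i)$, $F(w)=(-A_1^\top y,\dots,-A_m^\top y,\ \sum_iA_ix_i-b)$, $\mathcal{W}=\mathcal{X}_1\times\cdots\times\mathcal{X}_m\times\mathbb{R}^\ell$, and $\mathcal{W}^*=\{w^*\in\mathcal{W}:\theta(u)-\theta(u^* )+(w-w^* )^\top F(w^* )\ge0\ \forall w\in\mathcal{W}\}$ (nonempty). For symmetric $G$, $\|v\|_G^2:=v^\top Gv$; $\|\cdot\|$ is the Euclidean norm. Vectors are partitioned as $w=(R,x_m,y)$ with $R=(x_1,\dots,x_{m-1})$. Parameters: $\rho>0$,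 $\gamma\in(0,2)$, symmetric positive definite $P_i\in\mathbb{R}^{n_i\times n_i}$ ($i=1,\dots,m$) such that $G_1\succ0$, where $G_1$ is the symmetric block matrix with diagonal blocks $P_1,\dots,P_{m-1}$ and $(i,j)$ block $-\rho A_i^\top A_j$ for $i\ne j$, $1\le i,j\le m-1$. Matrices (w.r.t. the partition $(R,x_m,y)$): $Q=\begin{pmatrix}G_1&0&0\\0&\rho A_m^\top A_m+P_m&(1-\gamma)A_m^\top\\0&-A_m&\frac1\rho I_\ell\end{pmatrix}$, $M=\begin{pmatrix}I&0&0\\0&I_{n_m}&0\\0&-\rho A_m&\gamma I_\ell\end{pmatrix}$, $H=\begin{pmatrix}G_1&0&0\\0&P_m+\frac\rho\gamma A_m^\top A_m&\frac{1-\gamma}\gamma A_m^\top\\0&\frac{1-\gamma}\gamma A_m&\frac1{\gamma\rho}I_\ell\end{pmatrix}$, $N=Q^\top+Q-M^\top HM$. L-GADMM iteration: from an arbitrary $w^0=(x_1^0,\dots,x_m^0,y^0)\in\mathcal{W}$, for $k=0,1,2,\dots$: $x_j^{k+1}=\arg\min_{x_j\in\mathcal{X}_j}\{\theta_j(x_j)+\frac\rho2\|A_jx_j+\sum_{i=1,i\ne j}^mA_ix_i^k-b-\frac{y^k}\rho\|^2+\frac12\|x_j-x_j^k\|_{P_j}^2\}$ for $j=1,\dots,m-1$; $x_m^{k+1}=\arg\min_{x_m\in\mathcal{X}_m}\{\theta_m(x_m)+\frac\rho2\|\gamma\sum_{i=1}^{m-1}A_ix_i^{k+1}+(1-\gamma)(b-A_mx_m^k)+A_mx_m-b-\frac{y^k}\rho\|^2+\frac12\|x_m-x_m^k\|_{P_m}^2\}$;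 $y^{k+1}=y^k-\rho\big(\gamma\sum_{i=1}^{m-1}A_ix_i^{k+1}+(1-\gamma)(b-A_mx_m^k)+A_mx_m^{k+1}-b\big)$. Auxiliary sequence: $\bar w^k=(\bar x_1^k,\dots,\bar x_m^k,\bar y^k)$ with $\bar x_i^k=x_i^{k+1}$ ($i=1,\dots,m$) and $\bar y^k=y^k-\rho(\sum_{i=1}^{m-1}A_ix_i^{k+1}+A_mx_m^k-b)$; $\bar u^k=(\bar x_1^k,\dots,\bar x_m^k)$, $R^k=(x_1^k,\dots,x_{m-1}^k)$, $\bar R^k=(\bar x_1^k,\dots,\bar x_{m-1}^k)$. *)

theory Defs
  imports Complex_Main "Jordan_Normal_Form.DL_Rank"
begin

text \<open>A block vector w = (x_1,...,x_m,y) is represented by a pair (xs, y) with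
  xs :: nat => real vec (blocks indexed 1..m) and y :: real vec.\<close>

definition vsum :: "nat \<Rightarrow> (nat \<Rightarrow> real vec) \<Rightarrow> nat set \<Rightarrow> real vec" where
  "vsum d f I = vec d (\<lambda>r. \<Sum>i\<in>I. f i $ r)"

definition sqn :: "real vec \<Rightarrow> real" where
  "sqn v = v \<bullet> v"

definition convex_vset :: "nat \<Rightarrow> real vec set \<Rightarrow> bool" where
  "convex_vset d S \<longleftrightarrow> S \<subseteq> carrier_vec d \<and>
     (\<forall>u\<in>S. \<forall>v\<in>S. \<forall>t::real. 0 \<le> t \<and> t \<le> 1 \<longrightarrow> t \<cdot>\<^sub>v u + (1 - t) \<cdot>\<^sub>v v \<in> S)"

definition closed_vset :: "nat \<Rightarrow> real vec set \<Rightarrow> bool" where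
  "closed_vset d S \<longleftrightarrow> S \<subseteq> carrier_vec d \<and>
     (\<forall>s L. (\<forall>k. s k \<in> S) \<and> L \<in> carrier_vec d \<and> (\<forall>r<d. (\<lambda>k. s k $ r) \<longlonglongrightarrow> L $ r)
        \<longrightarrow> L \<in> S)"

definition convex_vfun :: "nat \<Rightarrow> (real vec \<Rightarrow> real) \<Rightarrow> bool" where
  "convex_vfun d f \<longleftrightarrow> (\<forall>u\<in>carrier_vec d. \<forall>v\<in>carrier_vec d. \<forall>t::real. 0 \<le> t \<and> t \<le> 1 \<longrightarrow>
      f (t \<cdot>\<^sub>v u + (1 - t) \<cdot>\<^sub>v v) \<le> t * f u + (1 - t) * f v)"

definition sym_pd :: "nat \<Rightarrow> real mat \<Rightarrow> bool" where
  "sym_pd d P \<longleftrightarrow> P \<in> carrier_mat d d \<and> P\<^sup>T = P \<and>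
     (\<forall>q\<in>carrier_vec d. q \<noteq> 0\<^sub>v d \<longrightarrow> q \<bullet> (P *\<^sub>v q) > 0)"

definition full_col_rank :: "nat \<Rightarrow> nat \<Rightarrow> real mat \<Rightarrow> bool" where
  "full_col_rank l d A \<longleftrightarrow> A \<in> carrier_mat l d \<and> vec_space.rank l A = d"

text \<open>Bilinear form a^T G_1 b of the block matrix G_1 (diagonal blocks P_1..P_(m-1),
  off-diagonal (i,j) blocks -rho A_i^T A_j), written out blockwise.\<close>
definition G1form :: "nat \<Rightarrow> (nat \<Rightarrow> real mat) \<Rightarrow> (nat \<Rightarrow> real mat) \<Rightarrow> real
    \<Rightarrow> (nat \<Rightarrow> real vec) \<Rightarrow> (nat \<Rightarrow> real vec) \<Rightarrow> real" where
  "G1form m A P \<rho> a b =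
     (\<Sum>i\<in>{1..m-1}. a i \<bullet> (P i *\<^sub>v b i))
     - \<rho> * (\<Sum>i\<in>{1..m-1}. \<Sum>j\<in>{1..m-1}. if i = j then 0 else (A i *\<^sub>v a i) \<bullet> (A j *\<^sub>v b j))"

definition G1_pd :: "nat \<Rightarrow> (nat \<Rightarrow> nat) \<Rightarrow> (nat \<Rightarrow> real mat) \<Rightarrow> (nat \<Rightarrow> real mat) \<Rightarrow> real \<Rightarrow> bool" where
  "G1_pd m n A P \<rho> \<longleftrightarrow>
     (\<forall>R. (\<forall>i\<in>{1..m-1}. R i \<in> carrier_vec (n i)) \<and> (\<exists>i\<in>{1..m-1}. R i \<noteq> 0\<^sub>v (n i))
        \<longrightarrow> G1form m A P \<rho> R R > 0)"

text \<open>Bilinear form a^T Q b for the (non-symmetric) block matrix Q w.r.t. the partition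
  (R, x_m, y), written out blockwise.\<close>
definition Qform :: "nat \<Rightarrow> (nat \<Rightarrow> real mat) \<Rightarrow> (nat \<Rightarrow> real mat) \<Rightarrow> real \<Rightarrow> real
    \<Rightarrow> (nat \<Rightarrow> real vec) \<times> real vec \<Rightarrow> (nat \<Rightarrow> real vec) \<times> real vec \<Rightarrow> real" where
  "Qform m A P \<rho> \<gamma> a b =
     (let ax = fst a; ay = snd a; bx = fst b; by = snd b in
       G1form m A P \<rho> ax bx
       + \<rho> * ((A m *\<^sub>v ax m) \<bullet> (A m *\<^sub>v bx m)) + ax m \<bullet> (P m *\<^sub>v bx m)
       + (1 - \<gamma>) * ((A m *\<^sub>v ax m) \<bullet> by)
       - ay \<bullet> (A m *\<^sub>v bx m)
       + (1 / \<rho>) * (ay \<bullet> by))"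

definition wminus :: "(nat \<Rightarrow> real vec) \<times> real vec \<Rightarrow> (nat \<Rightarrow> real vec) \<times> real vec
    \<Rightarrow> (nat \<Rightarrow> real vec) \<times> real vec" where
  "wminus a b = ((\<lambda>i. fst a i - fst b i), snd a - snd b)"

definition feasibleP :: "nat \<Rightarrow> nat \<Rightarrow> (nat \<Rightarrow> real vec set) \<Rightarrow> (nat \<Rightarrow> real mat) \<Rightarrow> real vec
    \<Rightarrow> (nat \<Rightarrow> real vec) \<Rightarrow> bool" where
  "feasibleP m l X A b u \<longleftrightarrow> (\<forall>i\<in>{1..m}. u i \<in> X i) \<and> vsum l (\<lambda>i. A i *\<^sub>v u i) {1..m} = b"

definition solvableP :: "nat \<Rightarrow> nat \<Rightarrow> (nat \<Rightarrow> real vec \<Rightarrow> real) \<Rightarrow> (nat \<Rightarrow> real vec set)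
    \<Rightarrow> (nat \<Rightarrow> real mat) \<Rightarrow> real vec \<Rightarrow> bool" where
  "solvableP m l \<theta> X A b \<longleftrightarrow> (\<exists>u. feasibleP m l X A b u \<and>
      (\<forall>v. feasibleP m l X A b v \<longrightarrow> (\<Sum>i\<in>{1..m}. \<theta> i (u i)) \<le> (\<Sum>i\<in>{1..m}. \<theta> i (v i))))"

definition inW :: "nat \<Rightarrow> nat \<Rightarrow> (nat \<Rightarrow> real vec set) \<Rightarrow> (nat \<Rightarrow> real vec) \<times> real vec \<Rightarrow> bool" where
  "inW m l X w \<longleftrightarrow> (\<forall>i\<in>{1..m}. fst w i \<in> X i) \<and> snd w \<in> carrier_vec l"

text \<open>Membership in W*: theta(u) - theta(u*) + (w - w*)^T F(w*) >= 0 for all w in W,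
  with F(w) = (-A_1^T y, ..., -A_m^T y, sum_i A_i x_i - b).\<close>
definition inWstar :: "nat \<Rightarrow> nat \<Rightarrow> (nat \<Rightarrow> real vec \<Rightarrow> real) \<Rightarrow> (nat \<Rightarrow> real vec set)
    \<Rightarrow> (nat \<Rightarrow> real mat) \<Rightarrow> real vec \<Rightarrow> (nat \<Rightarrow> real vec) \<times> real vec \<Rightarrow> bool" where
  "inWstar m l \<theta> X A b ws \<longleftrightarrow> inW m l X ws \<and>
     (\<forall>w. inW m l X w \<longrightarrow>
        (\<Sum>i\<in>{1..m}. \<theta> i (fst w i)) - (\<Sum>i\<in>{1..m}. \<theta> i (fst ws i))
        + (\<Sum>i\<in>{1..m}. (fst w i - fst ws i) \<bullet> (- ((A i)\<^sup>T *\<^sub>v snd ws)))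
        + (snd w - snd ws) \<bullet> (vsum l (\<lambda>i. A i *\<^sub>v fst ws i) {1..m} - b) \<ge> 0)"

end

theory Submission
  imports Defs
begin

(* For every k the predictor wbar^k solves the variational inequality
     theta(u) - theta(ubar^k) + (w - wbar^k)^T F(wbar^k) >= (w - wbar^k)^T Q (w^k - wbar^k)
   for all w in W: it is the sum of the first-order optimality conditions of the m proximal
   subproblems, once each subproblem residual is rewritten through ybar^k.  Taking w = wbar^(k+1)
   in the inequality for k and w = wbar^k in the one for k+1 and adding, the theta-terms cancel and
   so do the F-terms, because F is affine with a skew-symmetric linear part; by bilinearity of Q
   what remains is the claim. *)

lemma nonneg_of_linear_quadratic_nonneg:
  fixes a c :: real
  assumes nonneg: "\<And>t. 0 < t \<Longrightarrow> t \<le> 1 \<Longrightarrow> 0 \<le> t * a + t\<^sup>2 * c"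
  shows "0 \<le> a"
proof (rule ccontr)
  assume "\<not> 0 \<le> a"
  hence a: "a < 0" by simp
  define t where "t = min 1 (- a / (\<bar>c\<bar> + 1))"
  have "0 < - a / (\<bar>c\<bar> + 1)" using a by (intro divide_pos_pos) auto
  hence t: "0 < t" "t \<le> 1" by (auto simp: t_def)
  have "t * \<bar>c\<bar> \<le> - a / (\<bar>c\<bar> + 1) * \<bar>c\<bar>"
    by (intro mult_right_mono) (auto simp: t_def)
  also have "\<dots> < - a" using a by (simp add: field_simps)
  finally have "t * \<bar>c\<bar> < - a" .
  moreover have "t * c \<le> t * \<bar>c\<bar>" using t(1) by (intro mult_left_mono) auto
  ultimately have "a + t * c < 0" by linarith
  hence "t * (a + t * c) < 0" using t(1) by (simp add: mult_pos_neg)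
  hence "t * a + t\<^sup>2 * c < 0" by (simp add: power2_eq_square algebra_simps)
  with nonneg[OF t] show False by simp
qed

lemma sqn_add_smult:
  assumes "u \<in> carrier_vec d" "e \<in> carrier_vec d"
  shows "sqn (u + t \<cdot>\<^sub>v e) = sqn u + 2 * t * (e \<bullet> u) + t\<^sup>2 * sqn e"
  using assms unfolding sqn_def
  by (simp add: scalar_prod_add_distrib[of _ d] add_scalar_prod_distrib[of _ d]
      comm_scalar_prod[of e d u] power2_eq_square algebra_simps)

lemma sym_quad_add_smult:
  fixes P :: "real mat"
  assumes P: "P \<in> carrier_mat d d" "P\<^sup>T = P" and u: "u \<in> carrier_vec d" and e: "e \<in> carrier_vec d"
  shows "(u + t \<cdot>\<^sub>v e) \<bullet> (P *\<^sub>v (u + t \<cdot>\<^sub>v e))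
    = u \<bullet> (P *\<^sub>v u) + 2 * t * (e \<bullet> (P *\<^sub>v u)) + t\<^sup>2 * (e \<bullet> (P *\<^sub>v e))"
proof -
  have "u \<bullet> (P *\<^sub>v e) = e \<bullet> (P *\<^sub>v u)"
    using transpose_vec_mult_scalar[OF P(1) e u] comm_scalar_prod[of "P *\<^sub>v u" d e] P u e by simp
  with P u e show ?thesis
    by (simp add: mult_add_distrib_mat_vec[of _ d d] mult_mat_vec[of _ d d]
      scalar_prod_add_distrib[of _ d] add_scalar_prod_distrib[of _ d] power2_eq_square algebra_simps)
qed

lemma scalar_prod_transpose:
  fixes A :: "real mat"
  assumes "A \<in> carrier_mat l d" "u \<in> carrier_vec d" "v \<in> carrier_vec l"
  shows "u \<bullet> (A\<^sup>T *\<^sub>v v) = (A *\<^sub>v u) \<bullet> v"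
  using transpose_vec_mult_scalar[OF assms] assms
    comm_scalar_prod[of "A\<^sup>T *\<^sub>v v" d u] comm_scalar_prod[of "A *\<^sub>v u" l v] by simp

lemma prox_minimizer_variational_ineq:
  fixes \<theta> :: "real vec \<Rightarrow> real" and A P :: "real mat"
  assumes \<theta>: "convex_vfun d \<theta>" and S: "convex_vset d S" and v: "v \<in> S" and z: "z \<in> S"
    and A: "A \<in> carrier_mat l d" and c: "c \<in> carrier_vec l" and p: "p \<in> carrier_vec d"
    and P: "P \<in> carrier_mat d d" "P\<^sup>T = P"
    and min: "\<And>z. z \<in> S \<Longrightarrow>
      \<theta> v + \<rho> / 2 * sqn (A *\<^sub>v v + c) + 1 / 2 * ((v - p) \<bullet> (P *\<^sub>v (v - p)))
      \<le> \<theta> z + \<rho> / 2 * sqn (A *\<^sub>v z + c) + 1 / 2 * ((z - p) \<bullet> (P *\<^sub>v (z - p)))"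
  shows "0 \<le> \<theta> z - \<theta> v + (A *\<^sub>v (z - v)) \<bullet> (\<rho> \<cdot>\<^sub>v (A *\<^sub>v v + c))
    + (z - v) \<bullet> (P *\<^sub>v (v - p))"
proof -
  have vc: "v \<in> carrier_vec d" and zc: "z \<in> carrier_vec d"
    using S v z by (auto simp: convex_vset_def)
  define r e where "r = A *\<^sub>v v + c" and "e = z - v"
  have rc: "r \<in> carrier_vec l" and ec: "e \<in> carrier_vec d" and Aec: "A *\<^sub>v e \<in> carrier_vec l"
    and vpc: "v - p \<in> carrier_vec d"
    using A c vc zc p by (auto simp: r_def e_def)
  define X Y where "X = (A *\<^sub>v e) \<bullet> r" and "Y = e \<bullet> (P *\<^sub>v (v - p))"
  define R Q SA SP where "R = sqn r" and "Q = (v - p) \<bullet> (P *\<^sub>v (v - p))"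
    and "SA = sqn (A *\<^sub>v e)" and "SP = e \<bullet> (P *\<^sub>v e)"
  \<comment> \<open>compare v with the feasible points v + t (z - v), 0 < t \<le> 1\<close>
  have "0 \<le> \<theta> z - \<theta> v + \<rho> * X + Y"
  proof (rule nonneg_of_linear_quadratic_nonneg)
    fix t :: real assume t: "0 < t" "t \<le> 1"
    have vt: "v + t \<cdot>\<^sub>v e = t \<cdot>\<^sub>v z + (1 - t) \<cdot>\<^sub>v v"
      using vc zc by (intro eq_vecI) (auto simp: e_def left_diff_distrib right_diff_distrib)
    have mem: "v + t \<cdot>\<^sub>v e \<in> S" unfolding vt using S v z t by (auto simp: convex_vset_def)
    have aff: "A *\<^sub>v (v + t \<cdot>\<^sub>v e) + c = r + t \<cdot>\<^sub>v (A *\<^sub>v e)"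
      using A vc ec c by (intro eq_vecI)
        (auto simp: r_def mult_add_distrib_mat_vec[OF A] mult_mat_vec[OF A])
    have shift: "v + t \<cdot>\<^sub>v e - p = v - p + t \<cdot>\<^sub>v e"
      using vc ec p by (intro eq_vecI) auto
    define \<theta>t where "\<theta>t = \<theta> (v + t \<cdot>\<^sub>v e)"
    have "\<theta> v + \<rho> / 2 * R + 1 / 2 * Q
       \<le> \<theta>t + \<rho> / 2 * (R + 2 * t * X + t\<^sup>2 * SA) + 1 / 2 * (Q + 2 * t * Y + t\<^sup>2 * SP)"
      using min[OF mem] unfolding aff shift r_def[symmetric] sqn_add_smult[OF rc Aec]
        sym_quad_add_smult[OF P vpc ec] \<theta>t_def X_def Y_def R_def Q_def SA_def SP_def .
    moreover have "\<theta>t \<le> t * \<theta> z + (1 - t) * \<theta> v"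
      unfolding \<theta>t_def vt using \<theta> vc zc t by (auto simp: convex_vfun_def)
    ultimately show "0 \<le> t * (\<theta> z - \<theta> v + \<rho> * X + Y) + t\<^sup>2 * (\<rho> / 2 * SA + 1 / 2 * SP)"
      by (simp add: algebra_simps)
  qed
  then show ?thesis
    using Aec rc by (simp add: X_def Y_def r_def e_def)
qed

lemma vsum_carrier [simp]: "vsum l f I \<in> carrier_vec l"
  by (simp add: vsum_def)

lemma dim_vsum [simp]: "dim_vec (vsum l f I) = l"
  by (simp add: vsum_def)

lemma index_vsum [simp]: "r < l \<Longrightarrow> vsum l f I $ r = (\<Sum>i\<in>I. f i $ r)"
  by (simp add: vsum_def)

lemma scalar_prod_vsum:
  assumes u: "u \<in> carrier_vec l" and f: "\<And>i. i \<in> I \<Longrightarrow> f i \<in> carrier_vec l"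
  shows "u \<bullet> vsum l f I = (\<Sum>i\<in>I. u \<bullet> f i)"
proof -
  have "u \<bullet> vsum l f I = (\<Sum>r\<in>{0..<l}. \<Sum>i\<in>I. u $ r * f i $ r)"
    unfolding scalar_prod_def dim_vsum by (intro sum.cong refl) (simp add: sum_distrib_left)
  also have "\<dots> = (\<Sum>i\<in>I. \<Sum>r\<in>{0..<l}. u $ r * f i $ r)"
    by (rule sum.swap)
  also have "\<dots> = (\<Sum>i\<in>I. u \<bullet> f i)"
  proof (intro sum.cong refl)
    fix i assume "i \<in> I"
    with f have "dim_vec (f i) = l" by (simp add: carrier_vecD)
    then show "(\<Sum>r\<in>{0..<l}. u $ r * f i $ r) = u \<bullet> f i" by (simp add: scalar_prod_def)
  qed
  finally show ?thesis .
qed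

definition F_pairing :: "nat \<Rightarrow> nat \<Rightarrow> (nat \<Rightarrow> real mat) \<Rightarrow> real vec
    \<Rightarrow> (nat \<Rightarrow> real vec) \<times> real vec \<Rightarrow> (nat \<Rightarrow> real vec) \<times> real vec \<Rightarrow> real" where
  "F_pairing m l A b w w' =
     (\<Sum>i\<in>{1..m}. (fst w i - fst w' i) \<bullet> (- ((A i)\<^sup>T *\<^sub>v snd w')))
     + (snd w - snd w') \<bullet> (vsum l (\<lambda>i. A i *\<^sub>v fst w' i) {1..m} - b)"

locale block_mats =
  fixes m l :: nat and n :: "nat \<Rightarrow> nat" and A P :: "nat \<Rightarrow> real mat"
  assumes m_pos: "1 \<le> m"
    and A_carrier: "\<And>i. i \<in> {1..m} \<Longrightarrow> A i \<in> carrier_mat l (n i)"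
    and P_carrier: "\<And>i. i \<in> {1..m} \<Longrightarrow> P i \<in> carrier_mat (n i) (n i)"
begin

definition block_vec :: "(nat \<Rightarrow> real vec) \<times> real vec \<Rightarrow> bool" where
  "block_vec w \<longleftrightarrow> (\<forall>i\<in>{1..m}. fst w i \<in> carrier_vec (n i)) \<and> snd w \<in> carrier_vec l"

lemma A_mult_carrier: "i \<in> {1..m} \<Longrightarrow> v \<in> carrier_vec (n i) \<Longrightarrow> A i *\<^sub>v v \<in> carrier_vec l"
  using A_carrier by (rule mult_mat_vec_carrier)

lemma block_vec_wminus: "block_vec a \<Longrightarrow> block_vec b \<Longrightarrow> block_vec (wminus a b)"
  by (simp add: block_vec_def wminus_def)

lemma G1form_diff_right:
  assumes a: "\<And>i. i \<in> {1..m} \<Longrightarrow> a i \<in> carrier_vec (n i)"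
    and b: "\<And>i. i \<in> {1..m} \<Longrightarrow> b i \<in> carrier_vec (n i)"
    and c: "\<And>i. i \<in> {1..m} \<Longrightarrow> c i \<in> carrier_vec (n i)"
  shows "G1form m A P \<rho> a (\<lambda>i. b i - c i) = G1form m A P \<rho> a b - G1form m A P \<rho> a c"
proof -
  have P: "a i \<bullet> (P i *\<^sub>v (b i - c i)) = a i \<bullet> (P i *\<^sub>v b i) - a i \<bullet> (P i *\<^sub>v c i)"
    if "i \<in> {1..m-1}" for i
  proof -
    have i: "i \<in> {1..m}" using that by auto
    from a[OF i] b[OF i] c[OF i] P_carrier[OF i] show ?thesis
      by (simp add: mult_minus_distrib_mat_vec[of "P i" "n i" "n i"] scalar_prod_minus_distrib[of _ "n i"])
  qed
  have A: "(A i *\<^sub>v a i) \<bullet> (A j *\<^sub>v (b j - c j))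
      = (A i *\<^sub>v a i) \<bullet> (A j *\<^sub>v b j) - (A i *\<^sub>v a i) \<bullet> (A j *\<^sub>v c j)"
    if "i \<in> {1..m-1}" "j \<in> {1..m-1}" for i j
  proof -
    have i: "i \<in> {1..m}" and j: "j \<in> {1..m}" using that by auto
    from a[OF i] b[OF j] c[OF j] A_carrier[OF i] A_carrier[OF j] show ?thesis
      by (simp add: mult_minus_distrib_mat_vec[of "A j" l "n j"] scalar_prod_minus_distrib[of _ l])
  qed
  have "(\<Sum>i\<in>{1..m-1}. \<Sum>j\<in>{1..m-1}. if i = j then 0 else (A i *\<^sub>v a i) \<bullet> (A j *\<^sub>v (b j - c j)))
    = (\<Sum>i\<in>{1..m-1}. \<Sum>j\<in>{1..m-1}. (if i = j then 0 else (A i *\<^sub>v a i) \<bullet> (A j *\<^sub>v b j))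
         - (if i = j then 0 else (A i *\<^sub>v a i) \<bullet> (A j *\<^sub>v c j)))"
    by (intro sum.cong refl) (simp add: A)
  then show ?thesis
    unfolding G1form_def by (simp add: P sum_subtractf right_diff_distrib)
qed

lemma G1form_diff_left:
  assumes a: "\<And>i. i \<in> {1..m} \<Longrightarrow> a i \<in> carrier_vec (n i)"
    and b: "\<And>i. i \<in> {1..m} \<Longrightarrow> b i \<in> carrier_vec (n i)"
    and c: "\<And>i. i \<in> {1..m} \<Longrightarrow> c i \<in> carrier_vec (n i)"
  shows "G1form m A P \<rho> (\<lambda>i. a i - b i) c = G1form m A P \<rho> a c - G1form m A P \<rho> b c"
proof -
  have P: "(a i - b i) \<bullet> (P i *\<^sub>v c i) = a i \<bullet> (P i *\<^sub>v c i) - b i \<bullet> (P i *\<^sub>v c i)"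
    if "i \<in> {1..m-1}" for i
  proof -
    have i: "i \<in> {1..m}" using that by auto
    from a[OF i] b[OF i] c[OF i] P_carrier[OF i] show ?thesis
      by (simp add: minus_scalar_prod_distrib[of _ "n i"])
  qed
  have A: "(A i *\<^sub>v (a i - b i)) \<bullet> (A j *\<^sub>v c j)
      = (A i *\<^sub>v a i) \<bullet> (A j *\<^sub>v c j) - (A i *\<^sub>v b i) \<bullet> (A j *\<^sub>v c j)"
    if "i \<in> {1..m-1}" "j \<in> {1..m-1}" for i j
  proof -
    have i: "i \<in> {1..m}" and j: "j \<in> {1..m}" using that by auto
    from a[OF i] b[OF i] c[OF j] A_carrier[OF i] A_carrier[OF j] show ?thesis
      by (simp add: mult_minus_distrib_mat_vec[of "A i" l "n i"] minus_scalar_prod_distrib[of _ l])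
  qed
  have "(\<Sum>i\<in>{1..m-1}. \<Sum>j\<in>{1..m-1}. if i = j then 0 else (A i *\<^sub>v (a i - b i)) \<bullet> (A j *\<^sub>v c j))
    = (\<Sum>i\<in>{1..m-1}. \<Sum>j\<in>{1..m-1}. (if i = j then 0 else (A i *\<^sub>v a i) \<bullet> (A j *\<^sub>v c j))
         - (if i = j then 0 else (A i *\<^sub>v b i) \<bullet> (A j *\<^sub>v c j)))"
    by (intro sum.cong refl) (simp add: A)
  then show ?thesis
    unfolding G1form_def by (simp add: P sum_subtractf right_diff_distrib)
qed

lemma Qform_diff_right:
  assumes "block_vec a" "block_vec b" "block_vec c"
  shows "Qform m A P \<rho> \<gamma> a (wminus b c) = Qform m A P \<rho> \<gamma> a b - Qform m A P \<rho> \<gamma> a c"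
proof -
  have m: "m \<in> {1..m}" using m_pos by simp
  have a: "fst a m \<in> carrier_vec (n m)" "snd a \<in> carrier_vec l"
    and b: "fst b m \<in> carrier_vec (n m)" "snd b \<in> carrier_vec l"
    and c: "fst c m \<in> carrier_vec (n m)" "snd c \<in> carrier_vec l"
    using assms m by (auto simp: block_vec_def)
  have Ab: "A m *\<^sub>v fst b m \<in> carrier_vec l" and Ac: "A m *\<^sub>v fst c m \<in> carrier_vec l"
    and Aa: "A m *\<^sub>v fst a m \<in> carrier_vec l"
    using a b c by (auto intro: A_mult_carrier[OF m])
  have A_diff: "A m *\<^sub>v (fst b m - fst c m) = A m *\<^sub>v fst b m - A m *\<^sub>v fst c m"
    by (rule mult_minus_distrib_mat_vec[OF A_carrier[OF m] b(1) c(1)])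
  have P_diff: "P m *\<^sub>v (fst b m - fst c m) = P m *\<^sub>v fst b m - P m *\<^sub>v fst c m"
    by (rule mult_minus_distrib_mat_vec[OF P_carrier[OF m] b(1) c(1)])
  have G1: "G1form m A P \<rho> (fst a) (\<lambda>i. fst b i - fst c i)
      = G1form m A P \<rho> (fst a) (fst b) - G1form m A P \<rho> (fst a) (fst c)"
    by (rule G1form_diff_right) (use assms in \<open>auto simp: block_vec_def\<close>)
  show ?thesis
    unfolding Qform_def Let_def wminus_def fst_conv snd_conv G1 A_diff P_diff
      scalar_prod_minus_distrib[OF Aa Ab Ac] scalar_prod_minus_distrib[OF a(2) Ab Ac]
      scalar_prod_minus_distrib[OF a(1) mult_mat_vec_carrier[OF P_carrier[OF m] b(1)]
        mult_mat_vec_carrier[OF P_carrier[OF m] c(1)]]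
      scalar_prod_minus_distrib[OF Aa b(2) c(2)] scalar_prod_minus_distrib[OF a(2) b(2) c(2)]
    by (simp only: right_diff_distrib)
qed

lemma Qform_diff_left:
  assumes "block_vec a" "block_vec b" "block_vec c"
  shows "Qform m A P \<rho> \<gamma> (wminus a b) c = Qform m A P \<rho> \<gamma> a c - Qform m A P \<rho> \<gamma> b c"
proof -
  have m: "m \<in> {1..m}" using m_pos by simp
  have a: "fst a m \<in> carrier_vec (n m)" "snd a \<in> carrier_vec l"
    and b: "fst b m \<in> carrier_vec (n m)" "snd b \<in> carrier_vec l"
    and c: "fst c m \<in> carrier_vec (n m)" "snd c \<in> carrier_vec l"
    using assms m by (auto simp: block_vec_def)
  have Aa: "A m *\<^sub>v fst a m \<in> carrier_vec l" and Ab: "A m *\<^sub>v fst b m \<in> carrier_vec l"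
    and Ac: "A m *\<^sub>v fst c m \<in> carrier_vec l"
    using a b c by (auto intro: A_mult_carrier[OF m])
  have A_diff: "A m *\<^sub>v (fst a m - fst b m) = A m *\<^sub>v fst a m - A m *\<^sub>v fst b m"
    by (rule mult_minus_distrib_mat_vec[OF A_carrier[OF m] a(1) b(1)])
  have G1: "G1form m A P \<rho> (\<lambda>i. fst a i - fst b i) (fst c)
      = G1form m A P \<rho> (fst a) (fst c) - G1form m A P \<rho> (fst b) (fst c)"
    by (rule G1form_diff_left) (use assms in \<open>auto simp: block_vec_def\<close>)
  show ?thesis
    unfolding Qform_def Let_def wminus_def fst_conv snd_conv G1 A_diff
      minus_scalar_prod_distrib[OF Aa Ab Ac] minus_scalar_prod_distrib[OF a(2) b(2) Ac]
      minus_scalar_prod_distrib[OF a(1) b(1) mult_mat_vec_carrier[OF P_carrier[OF m] c(1)]]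
      minus_scalar_prod_distrib[OF Aa Ab c(2)] minus_scalar_prod_distrib[OF a(2) b(2) c(2)]
    by (simp only: right_diff_distrib)
qed

lemma G1form_eq_sum_vsum:
  assumes a: "\<And>i. i \<in> {1..m} \<Longrightarrow> a i \<in> carrier_vec (n i)"
    and c: "\<And>i. i \<in> {1..m} \<Longrightarrow> c i \<in> carrier_vec (n i)"
  shows "G1form m A P \<rho> a c = (\<Sum>j\<in>{1..m-1}. a j \<bullet> (P j *\<^sub>v c j)
    - \<rho> * ((A j *\<^sub>v a j) \<bullet> vsum l (\<lambda>i. A i *\<^sub>v c i) ({1..m-1} - {j})))"
proof -
  have "(\<Sum>i\<in>{1..m-1}. if j = i then 0 else (A j *\<^sub>v a j) \<bullet> (A i *\<^sub>v c i))
      = (A j *\<^sub>v a j) \<bullet> vsum l (\<lambda>i. A i *\<^sub>v c i) ({1..m-1} - {j})" if j: "j \<in> {1..m-1}" for j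
  proof -
    have Aa: "A j *\<^sub>v a j \<in> carrier_vec l" using j a by (intro A_mult_carrier) auto
    have Ac: "\<And>i. i \<in> {1..m-1} - {j} \<Longrightarrow> A i *\<^sub>v c i \<in> carrier_vec l"
      using c by (intro A_mult_carrier) auto
    have "(\<Sum>i\<in>{1..m-1}. if j = i then 0 else (A j *\<^sub>v a j) \<bullet> (A i *\<^sub>v c i))
        = (\<Sum>i\<in>{1..m-1} - {j}. (A j *\<^sub>v a j) \<bullet> (A i *\<^sub>v c i))"
      using j by (subst sum.remove[of _ j]) (auto intro!: sum.cong)
    also have "\<dots> = (A j *\<^sub>v a j) \<bullet> vsum l (\<lambda>i. A i *\<^sub>v c i) ({1..m-1} - {j})"
      using Aa Ac by (rule scalar_prod_vsum[symmetric])
    finally show ?thesis .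
  qed
  then have double_sum: "(\<Sum>j\<in>{1..m-1}. \<Sum>i\<in>{1..m-1}. if j = i then 0 else (A j *\<^sub>v a j) \<bullet> (A i *\<^sub>v c i))
      = (\<Sum>j\<in>{1..m-1}. (A j *\<^sub>v a j) \<bullet> vsum l (\<lambda>i. A i *\<^sub>v c i) ({1..m-1} - {j}))"
    by (rule sum.cong[OF refl])
  show ?thesis
    unfolding G1form_def double_sum sum_subtractf sum_distrib_left ..
qed

lemma F_pairing_eq:
  assumes w: "block_vec w" and w': "block_vec w'" and b: "b \<in> carrier_vec l"
  shows "F_pairing m l A b w w'
    = (\<Sum>i\<in>{1..m}. snd w \<bullet> (A i *\<^sub>v fst w' i)) - (\<Sum>i\<in>{1..m}. snd w' \<bullet> (A i *\<^sub>v fst w i))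
      - snd w \<bullet> b + snd w' \<bullet> b"
proof -
  have y: "snd w \<in> carrier_vec l" "snd w' \<in> carrier_vec l" using w w' by (auto simp: block_vec_def)
  have x: "(fst w i - fst w' i) \<bullet> (- ((A i)\<^sup>T *\<^sub>v snd w'))
      = snd w' \<bullet> (A i *\<^sub>v fst w' i) - snd w' \<bullet> (A i *\<^sub>v fst w i)" if i: "i \<in> {1..m}" for i
  proof -
    have x: "fst w i \<in> carrier_vec (n i)" "fst w' i \<in> carrier_vec (n i)"
      using w w' i by (auto simp: block_vec_def)
    have Ax: "A i *\<^sub>v fst w i \<in> carrier_vec l" "A i *\<^sub>v fst w' i \<in> carrier_vec l"
      using A_mult_carrier[OF i] x by auto
    have "(fst w i - fst w' i) \<bullet> ((A i)\<^sup>T *\<^sub>v snd w') = (A i *\<^sub>v (fst w i - fst w' i)) \<bullet> snd w'"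
      using x y by (simp add: scalar_prod_transpose[OF A_carrier[OF i]])
    also have "\<dots> = snd w' \<bullet> (A i *\<^sub>v fst w i) - snd w' \<bullet> (A i *\<^sub>v fst w' i)"
      using Ax y by (simp add: mult_minus_distrib_mat_vec[OF A_carrier[OF i] x]
          minus_scalar_prod_distrib[OF Ax y(2)] comm_scalar_prod[of _ l "snd w'"])
    finally show ?thesis using x y A_carrier[OF i] by simp
  qed
  have xs: "(\<Sum>i\<in>{1..m}. (fst w i - fst w' i) \<bullet> (- ((A i)\<^sup>T *\<^sub>v snd w')))
      = (\<Sum>i\<in>{1..m}. snd w' \<bullet> (A i *\<^sub>v fst w' i)) - (\<Sum>i\<in>{1..m}. snd w' \<bullet> (A i *\<^sub>v fst w i))"
    unfolding sum_subtractf[symmetric] by (rule sum.cong) (simp_all add: x)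
  have ys: "(snd w - snd w') \<bullet> (vsum l (\<lambda>i. A i *\<^sub>v fst w' i) {1..m} - b)
      = (\<Sum>i\<in>{1..m}. snd w \<bullet> (A i *\<^sub>v fst w' i)) - (\<Sum>i\<in>{1..m}. snd w' \<bullet> (A i *\<^sub>v fst w' i))
        - snd w \<bullet> b + snd w' \<bullet> b"
  proof -
    have Ax: "\<And>i. i \<in> {1..m} \<Longrightarrow> A i *\<^sub>v fst w' i \<in> carrier_vec l"
      using w' A_mult_carrier by (auto simp: block_vec_def)
    have V: "vsum l (\<lambda>i. A i *\<^sub>v fst w' i) {1..m} \<in> carrier_vec l" by simp
    have "v \<bullet> vsum l (\<lambda>i. A i *\<^sub>v fst w' i) {1..m} = (\<Sum>i\<in>{1..m}. v \<bullet> (A i *\<^sub>v fst w' i))"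
      if "v \<in> carrier_vec l" for v
      using that Ax by (rule scalar_prod_vsum)
    note sums = this[OF y(1)] this[OF y(2)]
    show ?thesis
      unfolding minus_scalar_prod_distrib[OF y(1) y(2) minus_carrier_vec[OF V b]]
        scalar_prod_minus_distrib[OF y(1) V b] scalar_prod_minus_distrib[OF y(2) V b]
        sums
      by linarith
  qed
  show ?thesis
    unfolding F_pairing_def xs ys by linarith
qed

lemma F_pairing_antisym:
  assumes "block_vec w" "block_vec w'" "b \<in> carrier_vec l"
  shows "F_pairing m l A b w w' + F_pairing m l A b w' w = 0"
  using assms by (simp add: F_pairing_eq)

end

locale lgadmm = block_mats +
  fixes \<theta> :: "nat \<Rightarrow> real vec \<Rightarrow> real" and X :: "nat \<Rightarrow> real vec set" and b :: "real vec"
    and \<rho> \<gamma> :: real and x :: "nat \<Rightarrow> nat \<Rightarrow> real vec" and y ybar :: "nat \<Rightarrow> real vec"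
  assumes conv_theta: "\<And>i. i \<in> {1..m} \<Longrightarrow> convex_vfun (n i) (\<theta> i)"
    and X_convex: "\<And>i. i \<in> {1..m} \<Longrightarrow> convex_vset (n i) (X i)"
    and P_sym: "\<And>i. i \<in> {1..m} \<Longrightarrow> (P i)\<^sup>T = P i"
    and b_carrier: "b \<in> carrier_vec l"
    and rho_nonzero: "\<rho> \<noteq> 0"
    and x_in_X: "\<And>k i. i \<in> {1..m} \<Longrightarrow> x k i \<in> X i"
    and y0_carrier: "y 0 \<in> carrier_vec l"
    and step_j_min: "\<And>k j z. j \<in> {1..m-1} \<Longrightarrow> z \<in> X j \<Longrightarrow>
        \<theta> j (x (Suc k) j)
          + \<rho> / 2 * sqn (A j *\<^sub>v x (Suc k) j + vsum l (\<lambda>i. A i *\<^sub>v x k i) ({1..m} - {j})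
                         - b - (1 / \<rho>) \<cdot>\<^sub>v y k)
          + 1 / 2 * ((x (Suc k) j - x k j) \<bullet> (P j *\<^sub>v (x (Suc k) j - x k j)))
        \<le> \<theta> j z
          + \<rho> / 2 * sqn (A j *\<^sub>v z + vsum l (\<lambda>i. A i *\<^sub>v x k i) ({1..m} - {j})
                         - b - (1 / \<rho>) \<cdot>\<^sub>v y k)
          + 1 / 2 * ((z - x k j) \<bullet> (P j *\<^sub>v (z - x k j)))"
    and step_m_min: "\<And>k z. z \<in> X m \<Longrightarrow>
        \<theta> m (x (Suc k) m)
          + \<rho> / 2 * sqn (\<gamma> \<cdot>\<^sub>v vsum l (\<lambda>i. A i *\<^sub>v x (Suc k) i) {1..m-1}
                         + (1 - \<gamma>) \<cdot>\<^sub>v (b - A m *\<^sub>v x k m)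
                         + A m *\<^sub>v x (Suc k) m - b - (1 / \<rho>) \<cdot>\<^sub>v y k)
          + 1 / 2 * ((x (Suc k) m - x k m) \<bullet> (P m *\<^sub>v (x (Suc k) m - x k m)))
        \<le> \<theta> m z
          + \<rho> / 2 * sqn (\<gamma> \<cdot>\<^sub>v vsum l (\<lambda>i. A i *\<^sub>v x (Suc k) i) {1..m-1}
                         + (1 - \<gamma>) \<cdot>\<^sub>v (b - A m *\<^sub>v x k m)
                         + A m *\<^sub>v z - b - (1 / \<rho>) \<cdot>\<^sub>v y k)
          + 1 / 2 * ((z - x k m) \<bullet> (P m *\<^sub>v (z - x k m)))"
    and step_y: "\<And>k. y (Suc k) = y k - \<rho> \<cdot>\<^sub>v (\<gamma> \<cdot>\<^sub>v vsum l (\<lambda>i. A i *\<^sub>v x (Suc k) i) {1..m-1}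
                         + (1 - \<gamma>) \<cdot>\<^sub>v (b - A m *\<^sub>v x k m) + A m *\<^sub>v x (Suc k) m - b)"
    and ybar_eq: "\<And>k. ybar k = y k - \<rho> \<cdot>\<^sub>v (vsum l (\<lambda>i. A i *\<^sub>v x (Suc k) i) {1..m-1}
                         + A m *\<^sub>v x k m - b)"
begin

lemma m_mem: "m \<in> {1..m}"
  using m_pos by simp

lemma X_carrier: "i \<in> {1..m} \<Longrightarrow> X i \<subseteq> carrier_vec (n i)"
  using X_convex by (simp add: convex_vset_def)

lemma x_carrier: "i \<in> {1..m} \<Longrightarrow> x k i \<in> carrier_vec (n i)"
  using x_in_X X_carrier by blast

lemma Ax_carrier: "i \<in> {1..m} \<Longrightarrow> A i *\<^sub>v x k i \<in> carrier_vec l"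
  by (intro A_mult_carrier x_carrier)

lemma y_carrier: "y k \<in> carrier_vec l"
proof (induction k)
  case 0 show ?case by (rule y0_carrier)
next
  case (Suc k)
  with Ax_carrier[OF m_mem] b_carrier show ?case by (simp add: step_y)
qed

lemma ybar_carrier: "ybar k \<in> carrier_vec l"
  using y_carrier Ax_carrier[OF m_mem] b_carrier by (simp add: ybar_eq)

lemma dim_simps [simp]:
  "dim_vec (y k) = l" "dim_vec (ybar k) = l" "dim_vec b = l" "dim_row (A m) = l"
  using y_carrier ybar_carrier b_carrier A_carrier[OF m_mem] by auto

lemma index_ybar:
  "r < l \<Longrightarrow> ybar k $ r = y k $ r - \<rho> * ((\<Sum>i\<in>{1..m-1}. (A i *\<^sub>v x (Suc k) i) $ r) + (A m *\<^sub>v x k m) $ r - b $ r)"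
  by (simp add: ybar_eq del: index_mult_mat_vec)

lemma index_A_diff:
  assumes r: "r < l" and i: "i \<in> {1..m}"
  shows "(A i *\<^sub>v (x s i - x t i)) $ r = (A i *\<^sub>v x s i) $ r - (A i *\<^sub>v x t i) $ r"
proof -
  have "A i *\<^sub>v (x s i - x t i) = A i *\<^sub>v x s i - A i *\<^sub>v x t i"
    by (rule mult_minus_distrib_mat_vec[OF A_carrier[OF i] x_carrier[OF i] x_carrier[OF i]])
  then show ?thesis using r A_carrier[OF i] by (simp del: index_mult_mat_vec)
qed

lemma sum_upto_m_split: "(\<Sum>i\<in>{1..m}. f i) = (\<Sum>i\<in>{1..m-1}. f i) + (f m :: real)"
proof -
  have "{1..m} = insert m {1..m-1}" using m_pos by auto
  then show ?thesis using m_pos by (simp add: add.commute)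
qed

lemma sum_upto_m_minus_split:
  assumes "j \<in> {1..m-1}"
  shows "(\<Sum>i\<in>{1..m}-{j}. f i) = (\<Sum>i\<in>{1..m-1}-{j}. f i) + (f m :: real)"
proof -
  have "{1..m}-{j} = insert m ({1..m-1}-{j})" "m \<notin> {1..m-1}-{j}" using assms m_pos by auto
  then show ?thesis by (simp add: add.commute)
qed

lemma sum_upto_pred_m_remove:
  assumes "j \<in> {1..m-1}"
  shows "(\<Sum>i\<in>{1..m-1}. f i) = f j + (\<Sum>i\<in>{1..m-1}-{j}. (f i :: real))"
  using assms by (simp add: sum.remove)

lemma multiplier_residual:
  "vsum l (\<lambda>i. A i *\<^sub>v x (Suc k) i) {1..m} - b
    = (1 / \<rho>) \<cdot>\<^sub>v (y k - ybar k) - A m *\<^sub>v (x k m - x (Suc k) m)"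
proof (rule eq_vecI)
  fix r assume "r < dim_vec ((1 / \<rho>) \<cdot>\<^sub>v (y k - ybar k) - A m *\<^sub>v (x k m - x (Suc k) m))"
  then have r: "r < l" by simp
  then show "(vsum l (\<lambda>i. A i *\<^sub>v x (Suc k) i) {1..m} - b) $ r
      = ((1 / \<rho>) \<cdot>\<^sub>v (y k - ybar k) - A m *\<^sub>v (x k m - x (Suc k) m)) $ r"
    using rho_nonzero sum_upto_m_split[of "\<lambda>i. (A i *\<^sub>v x (Suc k) i) $ r"]
    by (simp add: index_ybar index_A_diff[OF r m_mem] field_simps del: index_mult_mat_vec)
qed simp

definition subproblem_shift :: "nat \<Rightarrow> nat \<Rightarrow> real vec" where
  "subproblem_shift k j = vsum l (\<lambda>i. A i *\<^sub>v x k i) ({1..m} - {j}) - b - (1 / \<rho>) \<cdot>\<^sub>v y k"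

definition subproblem_shift_m :: "nat \<Rightarrow> real vec" where
  "subproblem_shift_m k = \<gamma> \<cdot>\<^sub>v vsum l (\<lambda>i. A i *\<^sub>v x (Suc k) i) {1..m-1} + (1 - \<gamma>) \<cdot>\<^sub>v (b - A m *\<^sub>v x k m)
    - b - (1 / \<rho>) \<cdot>\<^sub>v y k"

lemma subproblem_shift_carrier: "subproblem_shift k j \<in> carrier_vec l" "subproblem_shift_m k \<in> carrier_vec l"
  using y_carrier b_carrier Ax_carrier[OF m_mem] by (simp_all add: subproblem_shift_def subproblem_shift_m_def)

(* Through ybar^k the gradient of the augmented term becomes -ybar^k plus the coupling terms;
   this is where the blocks of Q come from. *)
lemma scaled_subproblem_residual:
  assumes j: "j \<in> {1..m-1}"
  shows "\<rho> \<cdot>\<^sub>v (A j *\<^sub>v x (Suc k) j + subproblem_shift k j)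
    = \<rho> \<cdot>\<^sub>v vsum l (\<lambda>i. A i *\<^sub>v (x k i - x (Suc k) i)) ({1..m-1} - {j}) - ybar k"
proof (rule eq_vecI)
  fix r assume "r < dim_vec (\<rho> \<cdot>\<^sub>v vsum l (\<lambda>i. A i *\<^sub>v (x k i - x (Suc k) i)) ({1..m-1} - {j}) - ybar k)"
  then have r: "r < l" by simp
  define a where "a t i = (A i *\<^sub>v x t i) $ r" for t i
  have a: "(A i *\<^sub>v x t i) $ r = a t i" for t i by (simp add: a_def)
  have jm: "j \<in> {1..m}" using j by auto
  have lhs: "(\<rho> \<cdot>\<^sub>v (A j *\<^sub>v x (Suc k) j + subproblem_shift k j)) $ r
      = \<rho> * ((A j *\<^sub>v x (Suc k) j) $ r + (\<Sum>i\<in>{1..m}-{j}. (A i *\<^sub>v x k i) $ r) - b $ r) - y k $ r"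
    using r jm rho_nonzero by (simp add: subproblem_shift_def algebra_simps del: index_mult_mat_vec)
  have "(\<Sum>i\<in>{1..m-1}-{j}. (A i *\<^sub>v (x k i - x (Suc k) i)) $ r) = (\<Sum>i\<in>{1..m-1}-{j}. a k i - a (Suc k) i)"
  proof (intro sum.cong refl)
    fix i assume "i \<in> {1..m-1}-{j}"
    then have "i \<in> {1..m}" by auto
    then show "(A i *\<^sub>v (x k i - x (Suc k) i)) $ r = a k i - a (Suc k) i"
      by (simp add: index_A_diff[OF r] a del: index_mult_mat_vec)
  qed
  then have rhs: "(\<rho> \<cdot>\<^sub>v vsum l (\<lambda>i. A i *\<^sub>v (x k i - x (Suc k) i)) ({1..m-1} - {j}) - ybar k) $ r
      = \<rho> * (\<Sum>i\<in>{1..m-1}-{j}. a k i - a (Suc k) i) - ybar k $ r"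
    using r by simp
  show "(\<rho> \<cdot>\<^sub>v (A j *\<^sub>v x (Suc k) j + subproblem_shift k j)) $ r
      = (\<rho> \<cdot>\<^sub>v vsum l (\<lambda>i. A i *\<^sub>v (x k i - x (Suc k) i)) ({1..m-1} - {j}) - ybar k) $ r"
    unfolding lhs rhs index_ybar[OF r] a sum_upto_m_minus_split[OF j] sum_upto_pred_m_remove[OF j] sum_subtractf
    by (simp add: algebra_simps)
qed (use j in \<open>simp add: subproblem_shift_def\<close>)

lemma scaled_subproblem_residual_m:
  "\<rho> \<cdot>\<^sub>v (A m *\<^sub>v x (Suc k) m + subproblem_shift_m k)
    = - ybar k - (1 - \<gamma>) \<cdot>\<^sub>v (y k - ybar k) - \<rho> \<cdot>\<^sub>v (A m *\<^sub>v (x k m - x (Suc k) m))"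
proof (rule eq_vecI)
  fix r assume "r < dim_vec (- ybar k - (1 - \<gamma>) \<cdot>\<^sub>v (y k - ybar k) - \<rho> \<cdot>\<^sub>v (A m *\<^sub>v (x k m - x (Suc k) m)))"
  then have r: "r < l" by simp
  define a where "a t i = (A i *\<^sub>v x t i) $ r" for t i
  have a: "(A i *\<^sub>v x t i) $ r = a t i" for t i by (simp add: a_def)
  have lhs: "(\<rho> \<cdot>\<^sub>v (A m *\<^sub>v x (Suc k) m + subproblem_shift_m k)) $ r
      = \<rho> * (a (Suc k) m + \<gamma> * (\<Sum>i\<in>{1..m-1}. a (Suc k) i) + (1 - \<gamma>) * (b $ r - a k m) - b $ r) - y k $ r"
    using r rho_nonzero by (simp add: subproblem_shift_m_def a algebra_simps del: index_mult_mat_vec)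
  have rhs: "(- ybar k - (1 - \<gamma>) \<cdot>\<^sub>v (y k - ybar k) - \<rho> \<cdot>\<^sub>v (A m *\<^sub>v (x k m - x (Suc k) m))) $ r
      = - ybar k $ r - (1 - \<gamma>) * (y k $ r - ybar k $ r) - \<rho> * (a k m - a (Suc k) m)"
    using r by (simp add: index_A_diff[OF r m_mem] a del: index_mult_mat_vec)
  show "(\<rho> \<cdot>\<^sub>v (A m *\<^sub>v x (Suc k) m + subproblem_shift_m k)) $ r
      = (- ybar k - (1 - \<gamma>) \<cdot>\<^sub>v (y k - ybar k) - \<rho> \<cdot>\<^sub>v (A m *\<^sub>v (x k m - x (Suc k) m))) $ r"
    unfolding lhs rhs index_ybar[OF r] a by (simp add: algebra_simps)
qed (simp add: subproblem_shift_m_def)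

lemma subproblem_min:
  assumes j: "j \<in> {1..m-1}" and z: "z \<in> X j"
  shows "\<theta> j (x (Suc k) j) + \<rho> / 2 * sqn (A j *\<^sub>v x (Suc k) j + subproblem_shift k j)
      + 1 / 2 * ((x (Suc k) j - x k j) \<bullet> (P j *\<^sub>v (x (Suc k) j - x k j)))
    \<le> \<theta> j z + \<rho> / 2 * sqn (A j *\<^sub>v z + subproblem_shift k j) + 1 / 2 * ((z - x k j) \<bullet> (P j *\<^sub>v (z - x k j)))"
proof -
  have jm: "j \<in> {1..m}" using j by auto
  have "A j *\<^sub>v u + vsum l (\<lambda>i. A i *\<^sub>v x k i) ({1..m} - {j}) - b - (1 / \<rho>) \<cdot>\<^sub>v y k
      = A j *\<^sub>v u + subproblem_shift k j" for u
    using jm by (intro eq_vecI) (simp_all add: subproblem_shift_def del: index_mult_mat_vec)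
  with step_j_min[OF j z, of k] show ?thesis by simp
qed

lemma subproblem_min_m:
  assumes z: "z \<in> X m"
  shows "\<theta> m (x (Suc k) m) + \<rho> / 2 * sqn (A m *\<^sub>v x (Suc k) m + subproblem_shift_m k)
      + 1 / 2 * ((x (Suc k) m - x k m) \<bullet> (P m *\<^sub>v (x (Suc k) m - x k m)))
    \<le> \<theta> m z + \<rho> / 2 * sqn (A m *\<^sub>v z + subproblem_shift_m k) + 1 / 2 * ((z - x k m) \<bullet> (P m *\<^sub>v (z - x k m)))"
proof -
  have "\<gamma> \<cdot>\<^sub>v vsum l (\<lambda>i. A i *\<^sub>v x (Suc k) i) {1..m-1} + (1 - \<gamma>) \<cdot>\<^sub>v (b - A m *\<^sub>v x k m)
      + A m *\<^sub>v u - b - (1 / \<rho>) \<cdot>\<^sub>v y k = A m *\<^sub>v u + subproblem_shift_m k" for u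
    by (intro eq_vecI) (simp_all add: subproblem_shift_m_def algebra_simps del: index_mult_mat_vec)
  with step_m_min[OF z, of k] show ?thesis by simp
qed

lemma block_variational_ineq:
  assumes j: "j \<in> {1..m-1}" and z: "z \<in> X j"
  shows "(z - x (Suc k) j) \<bullet> (P j *\<^sub>v (x k j - x (Suc k) j))
      - \<rho> * ((A j *\<^sub>v (z - x (Suc k) j)) \<bullet> vsum l (\<lambda>i. A i *\<^sub>v (x k i - x (Suc k) i)) ({1..m-1} - {j}))
    \<le> \<theta> j z - \<theta> j (x (Suc k) j) + (z - x (Suc k) j) \<bullet> (- ((A j)\<^sup>T *\<^sub>v ybar k))"
proof -
  have jm: "j \<in> {1..m}" using j by auto
  define v p V where "v = x (Suc k) j" and "p = x k j"
    and "V = vsum l (\<lambda>i. A i *\<^sub>v (x k i - x (Suc k) i)) ({1..m-1} - {j})"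
  have zc: "z \<in> carrier_vec (n j)" using z X_carrier[OF jm] by blast
  have vc: "v \<in> carrier_vec (n j)" and pc: "p \<in> carrier_vec (n j)"
    using x_carrier[OF jm] by (auto simp: v_def p_def)
  have Azv: "A j *\<^sub>v (z - v) \<in> carrier_vec l" using zc vc by (intro A_mult_carrier[OF jm]) auto
  have "0 \<le> \<theta> j z - \<theta> j v + (A j *\<^sub>v (z - v)) \<bullet> (\<rho> \<cdot>\<^sub>v (A j *\<^sub>v v + subproblem_shift k j))
      + (z - v) \<bullet> (P j *\<^sub>v (v - p))"
    unfolding v_def p_def
    by (rule prox_minimizer_variational_ineq[OF conv_theta[OF jm] X_convex[OF jm] x_in_X[OF jm] z
          A_carrier[OF jm] subproblem_shift_carrier(1) x_carrier[OF jm] P_carrier[OF jm] P_sym[OF jm] subproblem_min[OF j]])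
  moreover have "(A j *\<^sub>v (z - v)) \<bullet> (\<rho> \<cdot>\<^sub>v (A j *\<^sub>v v + subproblem_shift k j))
      = \<rho> * ((A j *\<^sub>v (z - v)) \<bullet> V) + (z - v) \<bullet> (- ((A j)\<^sup>T *\<^sub>v ybar k))"
    unfolding v_def scaled_subproblem_residual[OF j] V_def[symmetric]
    using Azv zc vc ybar_carrier A_carrier[OF jm]
    by (simp add: v_def V_def scalar_prod_minus_distrib[of _ l] scalar_prod_transpose[OF A_carrier[OF jm]])
  moreover have "(z - v) \<bullet> (P j *\<^sub>v (v - p)) = - ((z - v) \<bullet> (P j *\<^sub>v (p - v)))"
    using zc vc pc P_carrier[OF jm]
    by (simp add: mult_minus_distrib_mat_vec[of _ "n j" "n j"] scalar_prod_minus_distrib[of _ "n j"])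
  ultimately show ?thesis by (simp add: v_def p_def V_def)
qed

lemma block_variational_ineq_m:
  assumes z: "z \<in> X m"
  shows "(z - x (Suc k) m) \<bullet> (P m *\<^sub>v (x k m - x (Suc k) m))
      + \<rho> * ((A m *\<^sub>v (z - x (Suc k) m)) \<bullet> (A m *\<^sub>v (x k m - x (Suc k) m)))
      + (1 - \<gamma>) * ((A m *\<^sub>v (z - x (Suc k) m)) \<bullet> (y k - ybar k))
    \<le> \<theta> m z - \<theta> m (x (Suc k) m) + (z - x (Suc k) m) \<bullet> (- ((A m)\<^sup>T *\<^sub>v ybar k))"
proof -
  define v p where "v = x (Suc k) m" and "p = x k m"
  have zc: "z \<in> carrier_vec (n m)" using z X_carrier[OF m_mem] by blast
  have vc: "v \<in> carrier_vec (n m)" and pc: "p \<in> carrier_vec (n m)"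
    using x_carrier[OF m_mem] by (auto simp: v_def p_def)
  have Azv: "A m *\<^sub>v (z - v) \<in> carrier_vec l" and Apv: "A m *\<^sub>v (p - v) \<in> carrier_vec l"
    using zc vc pc by (auto intro: A_mult_carrier[OF m_mem])
  have "0 \<le> \<theta> m z - \<theta> m v + (A m *\<^sub>v (z - v)) \<bullet> (\<rho> \<cdot>\<^sub>v (A m *\<^sub>v v + subproblem_shift_m k))
      + (z - v) \<bullet> (P m *\<^sub>v (v - p))"
    unfolding v_def p_def
    by (rule prox_minimizer_variational_ineq[OF conv_theta[OF m_mem] X_convex[OF m_mem] x_in_X[OF m_mem] z
          A_carrier[OF m_mem] subproblem_shift_carrier(2) x_carrier[OF m_mem] P_carrier[OF m_mem] P_sym[OF m_mem]
          subproblem_min_m])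
  moreover have "(A m *\<^sub>v (z - v)) \<bullet> (\<rho> \<cdot>\<^sub>v (A m *\<^sub>v v + subproblem_shift_m k))
      = (z - v) \<bullet> (- ((A m)\<^sup>T *\<^sub>v ybar k)) - (1 - \<gamma>) * ((A m *\<^sub>v (z - v)) \<bullet> (y k - ybar k))
        - \<rho> * ((A m *\<^sub>v (z - v)) \<bullet> (A m *\<^sub>v (p - v)))"
    unfolding v_def p_def scaled_subproblem_residual_m
    using Azv Apv zc vc y_carrier ybar_carrier A_carrier[OF m_mem]
    by (simp add: v_def p_def scalar_prod_minus_distrib[of _ l] scalar_prod_transpose[OF A_carrier[OF m_mem]])
  moreover have "(z - v) \<bullet> (P m *\<^sub>v (v - p)) = - ((z - v) \<bullet> (P m *\<^sub>v (p - v)))"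
    using zc vc pc P_carrier[OF m_mem]
    by (simp add: mult_minus_distrib_mat_vec[of _ "n m" "n m"] scalar_prod_minus_distrib[of _ "n m"])
  ultimately show ?thesis by (simp add: v_def p_def)
qed

lemma inW_block_vec: "inW m l X w \<Longrightarrow> block_vec w"
  using X_carrier unfolding inW_def block_vec_def by blast

lemma inW_iterates: "inW m l X (x k, y k)" "inW m l X (x (Suc k), ybar k)"
  using x_in_X y_carrier ybar_carrier by (auto simp: inW_def)

lemma F_pairing_prediction:
  assumes w: "block_vec w"
  shows "F_pairing m l A b w (x (Suc k), ybar k)
    = (\<Sum>i\<in>{1..m}. (fst w i - x (Suc k) i) \<bullet> (- ((A i)\<^sup>T *\<^sub>v ybar k)))
      + 1 / \<rho> * ((snd w - ybar k) \<bullet> (y k - ybar k))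
      - (snd w - ybar k) \<bullet> (A m *\<^sub>v (x k m - x (Suc k) m))"
proof -
  have "snd w - ybar k \<in> carrier_vec l" using w ybar_carrier by (auto simp: block_vec_def)
  moreover have "A m *\<^sub>v (x k m - x (Suc k) m) \<in> carrier_vec l"
    using x_carrier[OF m_mem] by (intro A_mult_carrier[OF m_mem]) auto
  ultimately show ?thesis
    unfolding F_pairing_def fst_conv snd_conv multiplier_residual
    using y_carrier ybar_carrier by (simp add: scalar_prod_minus_distrib[of _ l])
qed

lemma prediction_variational_ineq:
  assumes w: "inW m l X w"
  shows "Qform m A P \<rho> \<gamma> (wminus w (x (Suc k), ybar k)) (wminus (x k, y k) (x (Suc k), ybar k))
    \<le> (\<Sum>i\<in>{1..m}. \<theta> i (fst w i)) - (\<Sum>i\<in>{1..m}. \<theta> i (x (Suc k) i))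
      + F_pairing m l A b w (x (Suc k), ybar k)"
proof -
  define u d where "u i = fst w i - x (Suc k) i" and "d i = x k i - x (Suc k) i" for i
  define \<eta> where "\<eta> = snd w - ybar k"
  have wX: "\<And>i. i \<in> {1..m} \<Longrightarrow> fst w i \<in> X i" and wc: "block_vec w"
    using w inW_block_vec by (auto simp: inW_def)
  have uc: "\<And>i. i \<in> {1..m} \<Longrightarrow> u i \<in> carrier_vec (n i)"
    and dc: "\<And>i. i \<in> {1..m} \<Longrightarrow> d i \<in> carrier_vec (n i)"
    using wc x_carrier by (auto simp: u_def d_def block_vec_def)
  have Q: "Qform m A P \<rho> \<gamma> (wminus w (x (Suc k), ybar k)) (wminus (x k, y k) (x (Suc k), ybar k))
      = (\<Sum>j\<in>{1..m-1}. u j \<bullet> (P j *\<^sub>v d j)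
          - \<rho> * ((A j *\<^sub>v u j) \<bullet> vsum l (\<lambda>i. A i *\<^sub>v d i) ({1..m-1} - {j})))
        + \<rho> * ((A m *\<^sub>v u m) \<bullet> (A m *\<^sub>v d m)) + u m \<bullet> (P m *\<^sub>v d m)
        + (1 - \<gamma>) * ((A m *\<^sub>v u m) \<bullet> (y k - ybar k))
        - \<eta> \<bullet> (A m *\<^sub>v d m) + 1 / \<rho> * (\<eta> \<bullet> (y k - ybar k))"
    using G1form_eq_sum_vsum[OF uc dc, of \<rho>]
    by (simp add: Qform_def Let_def wminus_def u_def d_def \<eta>_def)
  have F: "F_pairing m l A b w (x (Suc k), ybar k)
      = (\<Sum>j\<in>{1..m-1}. u j \<bullet> (- ((A j)\<^sup>T *\<^sub>v ybar k))) + u m \<bullet> (- ((A m)\<^sup>T *\<^sub>v ybar k))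
        + 1 / \<rho> * (\<eta> \<bullet> (y k - ybar k)) - \<eta> \<bullet> (A m *\<^sub>v d m)"
    unfolding F_pairing_prediction[OF wc] sum_upto_m_split u_def d_def \<eta>_def ..
  have "(\<Sum>j\<in>{1..m-1}. u j \<bullet> (P j *\<^sub>v d j) - \<rho> * ((A j *\<^sub>v u j) \<bullet> vsum l (\<lambda>i. A i *\<^sub>v d i) ({1..m-1} - {j})))
      \<le> (\<Sum>j\<in>{1..m-1}. \<theta> j (fst w j) - \<theta> j (x (Suc k) j) + u j \<bullet> (- ((A j)\<^sup>T *\<^sub>v ybar k)))"
    using block_variational_ineq wX unfolding u_def d_def by (intro sum_mono) auto
  moreover have "u m \<bullet> (P m *\<^sub>v d m) + \<rho> * ((A m *\<^sub>v u m) \<bullet> (A m *\<^sub>v d m))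
      + (1 - \<gamma>) * ((A m *\<^sub>v u m) \<bullet> (y k - ybar k))
      \<le> \<theta> m (fst w m) - \<theta> m (x (Suc k) m) + u m \<bullet> (- ((A m)\<^sup>T *\<^sub>v ybar k))"
    using block_variational_ineq_m wX[OF m_mem] unfolding u_def d_def .
  ultimately show ?thesis
    unfolding Q F sum_upto_m_split[of "\<lambda>i. \<theta> i (fst w i)"] sum_upto_m_split[of "\<lambda>i. \<theta> i (x (Suc k) i)"]
    by (simp add: sum.distrib sum_subtractf)
qed

lemma Qform_increment_nonneg:
  "0 \<le> Qform m A P \<rho> \<gamma> (wminus (x (Suc k), ybar k) (x (Suc (Suc k)), ybar (Suc k)))
     (wminus (wminus (x k, y k) (x (Suc k), y (Suc k)))
             (wminus (x (Suc k), ybar k) (x (Suc (Suc k)), ybar (Suc k))))"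
proof -
  define w w' p q where "w = (x k, y k)" and "w' = (x (Suc k), y (Suc k))"
    and "p = (x (Suc k), ybar k)" and "q = (x (Suc (Suc k)), ybar (Suc k))"
  have blocks: "block_vec w" "block_vec w'" "block_vec p" "block_vec q"
    using inW_iterates inW_block_vec by (auto simp: w_def w'_def p_def q_def)
  have diffs: "block_vec (wminus w p)" "block_vec (wminus w' q)" "block_vec (wminus p q)"
    using blocks by (auto intro: block_vec_wminus)
  let ?\<Theta> = "\<lambda>u. \<Sum>i\<in>{1..m}. \<theta> i (u i)"
  have VI_k: "Qform m A P \<rho> \<gamma> (wminus q p) (wminus w p)
      \<le> ?\<Theta> (fst q) - ?\<Theta> (fst p) + F_pairing m l A b q p"
    using prediction_variational_ineq[OF inW_iterates(2), of "Suc k" k] by (simp add: w_def p_def q_def)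
  have VI_Suc_k: "Qform m A P \<rho> \<gamma> (wminus p q) (wminus w' q)
      \<le> ?\<Theta> (fst p) - ?\<Theta> (fst q) + F_pairing m l A b p q"
    using prediction_variational_ineq[OF inW_iterates(2), of k "Suc k"] by (simp add: w'_def p_def q_def)
  have "F_pairing m l A b q p + F_pairing m l A b p q = 0"
    using blocks(4,3) b_carrier by (rule F_pairing_antisym)
  moreover have "(y k - y (Suc k)) - (ybar k - ybar (Suc k)) = (y k - ybar k) - (y (Suc k) - ybar (Suc k))"
    by (intro eq_vecI) simp_all
  then have "wminus (wminus w w') (wminus p q) = wminus (wminus w p) (wminus w' q)"
    by (simp add: wminus_def w_def w'_def p_def q_def)
  then have "Qform m A P \<rho> \<gamma> (wminus p q) (wminus (wminus w w') (wminus p q))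
      = - Qform m A P \<rho> \<gamma> (wminus q p) (wminus w p) - Qform m A P \<rho> \<gamma> (wminus p q) (wminus w' q)"
    using blocks diffs by (simp add: Qform_diff_right Qform_diff_left)
  ultimately show ?thesis
    using VI_k VI_Suc_k by (simp add: w_def w'_def p_def q_def)
qed

end

theorem lemma4p2:
  fixes m l :: nat and n :: "nat \<Rightarrow> nat"
    and \<theta> :: "nat \<Rightarrow> real vec \<Rightarrow> real" and X :: "nat \<Rightarrow> real vec set"
    and A P :: "nat \<Rightarrow> real mat" and b :: "real vec"
    and \<rho> \<gamma> :: real
    and x :: "nat \<Rightarrow> nat \<Rightarrow> real vec" and y :: "nat \<Rightarrow> real vec"
    and ybar :: "nat \<Rightarrow> real vec"
  assumes m2: "m \<ge> 2" and lpos: "l > 0" and npos: "\<forall>i\<in>{1..m}. n i > 0"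
    and conv_theta: "\<forall>i\<in>{1..m}. convex_vfun (n i) (\<theta> i)"
    and X_ne: "\<forall>i\<in>{1..m}. X i \<noteq> {}"
    and X_closed: "\<forall>i\<in>{1..m}. closed_vset (n i) (X i)"
    and X_convex: "\<forall>i\<in>{1..m}. convex_vset (n i) (X i)"
    and A_rank: "\<forall>i\<in>{1..m}. full_col_rank l (n i) (A i)"
    and b_dim: "b \<in> carrier_vec l"
    and P_solvable: "solvableP m l \<theta> X A b"
    and Wstar_ne: "\<exists>ws. inWstar m l \<theta> X A b ws"
    and rho_pos: "\<rho> > 0" and gamma_pos: "0 < \<gamma>" and gamma_lt2: "\<gamma> < 2"
    and P_pd: "\<forall>i\<in>{1..m}. sym_pd (n i) (P i)"
    and G1pd: "G1_pd m n A P \<rho>"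
    and init: "inW m l X (x 0, y 0)"
    and step_j_mem: "\<And>k j. j \<in> {1..m-1} \<Longrightarrow> x (Suc k) j \<in> X j"
    and step_j_min: "\<And>k j z. j \<in> {1..m-1} \<Longrightarrow> z \<in> X j \<Longrightarrow>
        \<theta> j (x (Suc k) j)
          + \<rho> / 2 * sqn (A j *\<^sub>v x (Suc k) j + vsum l (\<lambda>i. A i *\<^sub>v x k i) ({1..m} - {j})
                         - b - (1 / \<rho>) \<cdot>\<^sub>v y k)
          + 1 / 2 * ((x (Suc k) j - x k j) \<bullet> (P j *\<^sub>v (x (Suc k) j - x k j)))
        \<le> \<theta> j z
          + \<rho> / 2 * sqn (A j *\<^sub>v z + vsum l (\<lambda>i. A i *\<^sub>v x k i) ({1..m} - {j})
                         - b - (1 / \<rho>) \<cdot>\<^sub>v y k)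
          + 1 / 2 * ((z - x k j) \<bullet> (P j *\<^sub>v (z - x k j)))"
    and step_m_mem: "\<And>k. x (Suc k) m \<in> X m"
    and step_m_min: "\<And>k z. z \<in> X m \<Longrightarrow>
        \<theta> m (x (Suc k) m)
          + \<rho> / 2 * sqn (\<gamma> \<cdot>\<^sub>v vsum l (\<lambda>i. A i *\<^sub>v x (Suc k) i) {1..m-1}
                         + (1 - \<gamma>) \<cdot>\<^sub>v (b - A m *\<^sub>v x k m)
                         + A m *\<^sub>v x (Suc k) m - b - (1 / \<rho>) \<cdot>\<^sub>v y k)
          + 1 / 2 * ((x (Suc k) m - x k m) \<bullet> (P m *\<^sub>v (x (Suc k) m - x k m)))
        \<le> \<theta> m z
          + \<rho> / 2 * sqn (\<gamma> \<cdot>\<^sub>v vsum l (\<lambda>i. A i *\<^sub>v x (Suc k) i) {1..m-1}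
                         + (1 - \<gamma>) \<cdot>\<^sub>v (b - A m *\<^sub>v x k m)
                         + A m *\<^sub>v z - b - (1 / \<rho>) \<cdot>\<^sub>v y k)
          + 1 / 2 * ((z - x k m) \<bullet> (P m *\<^sub>v (z - x k m)))"
    and step_y: "\<And>k. y (Suc k) = y k - \<rho> \<cdot>\<^sub>v (\<gamma> \<cdot>\<^sub>v vsum l (\<lambda>i. A i *\<^sub>v x (Suc k) i) {1..m-1}
                         + (1 - \<gamma>) \<cdot>\<^sub>v (b - A m *\<^sub>v x k m) + A m *\<^sub>v x (Suc k) m - b)"
    and ybar_def: "\<And>k. ybar k = y k - \<rho> \<cdot>\<^sub>v (vsum l (\<lambda>i. A i *\<^sub>v x (Suc k) i) {1..m-1}
                         + A m *\<^sub>v x k m - b)"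
  shows "\<forall>k. Qform m A P \<rho> \<gamma>
            (wminus (x (Suc k), ybar k) (x (Suc (Suc k)), ybar (Suc k)))
            (wminus (wminus (x k, y k) (x (Suc k), y (Suc k)))
                    (wminus (x (Suc k), ybar k) (x (Suc (Suc k)), ybar (Suc k)))) \<ge> 0"
proof -
  \<comment> \<open>the bounds on gamma, G_1 > 0 and solvability of (P) only matter for convergence\<close>
  have iterates_in_X: "x k i \<in> X i" if i: "i \<in> {1..m}" for k i
  proof (cases k)
    case 0
    with init i show ?thesis by (simp add: inW_def)
  next
    case (Suc k')
    show ?thesis
    proof (cases "i = m")
      case True
      with Suc step_m_mem show ?thesis by simp
    next
      case False
      with i Suc show ?thesis by (auto intro: step_j_mem)
    qed
  qed
  interpret L: lgadmm m l n A P \<theta> X b \<rho> \<gamma> x y ybar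
  proof unfold_locales
    show "1 \<le> m" using m2 by simp
    show "\<And>i. i \<in> {1..m} \<Longrightarrow> A i \<in> carrier_mat l (n i)"
      using A_rank by (simp add: full_col_rank_def)
    show "\<And>i. i \<in> {1..m} \<Longrightarrow> P i \<in> carrier_mat (n i) (n i)"
      and "\<And>i. i \<in> {1..m} \<Longrightarrow> (P i)\<^sup>T = P i"
      using P_pd by (simp_all add: sym_pd_def)
    show "\<And>i. i \<in> {1..m} \<Longrightarrow> convex_vfun (n i) (\<theta> i)" using conv_theta by blast
    show "\<And>i. i \<in> {1..m} \<Longrightarrow> convex_vset (n i) (X i)" using X_convex by blast
    show "\<rho> \<noteq> 0" using rho_pos by simp
    show "y 0 \<in> carrier_vec l" using init by (simp add: inW_def)
  qed (fact b_dim iterates_in_X step_j_min step_m_min step_y ybar_def)+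
  show ?thesis using L.Qform_increment_nonneg by blast
qed

end
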